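(* Let $(C_q,\varphi)$ be a complex unit gain cycle of length $q\ge 3$. Then $r(C_q,\varphi)=2q-2c(C_q)-2\alpha(C_q)$ if and only if either $q$ is even and $\varphi(C_q)=(-1)^{q/2}$, or $q$ is odd and $\mathrm{Re}\big((-1)^{(q-1)/2}\varphi(C_q)\big)=0$.
   Context: A complex unit gain graph $(G,\varphi)$ is a simple finite graph $G$ with a gain function $\varphi$ assigning to each oriented edge $e_{ij}$ a complex number of modulus $1$ with $\varphi(e_{ji})=\overline{\varphi(e_{ij})}$; its adjacency matrix has $(i,j)$-entry $\varphi(e_{ij})$ for adjacent $v_i,v_j$ and $0$ otherwise, and $r(G,\varphi)$ is its rank. $\alpha$ is the independence number and $c(G)=|E(G)|-|V(G)|+\omega(G)$ the cyclomatic number ($\omega$ = number of components). For a cycle $C_q=u_1\cdots u_qu_1$, $\varphi(C_q)=\varphi(e_{u_1u_2})\cdots\varphi(e_{u_{q-1}u_q})\varphi(e_{u_qu_1})$. *)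

theory Defs
  imports Complex_Main "Jordan_Normal_Form.DL_Rank"
begin

definition simple_graph :: "'a set \<Rightarrow> ('a \<Rightarrow> 'a \<Rightarrow> bool) \<Rightarrow> bool" where
  "simple_graph V E \<longleftrightarrow> finite V \<and> (\<forall>x y. E x y \<longrightarrow> x \<in> V \<and> y \<in> V \<and> x \<noteq> y \<and> E y x)"

definition edge_set :: "'a set \<Rightarrow> ('a \<Rightarrow> 'a \<Rightarrow> bool) \<Rightarrow> 'a set set" where
  "edge_set V E = {{x, y} | x y. x \<in> V \<and> y \<in> V \<and> E x y}"

definition connected_rel :: "'a set \<Rightarrow> ('a \<Rightarrow> 'a \<Rightarrow> bool) \<Rightarrow> ('a \<times> 'a) set" where
  "connected_rel V E = {(x, y). x \<in> V \<and> y \<in> V \<and> (\<lambda>a b. a \<in> V \<and> b \<in> V \<and> E a b)\<^sup>*\<^sup>* x y}"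

definition num_components :: "'a set \<Rightarrow> ('a \<Rightarrow> 'a \<Rightarrow> bool) \<Rightarrow> nat" where
  "num_components V E = card (V // connected_rel V E)"

definition cyclomatic_number :: "'a set \<Rightarrow> ('a \<Rightarrow> 'a \<Rightarrow> bool) \<Rightarrow> int" where
  "cyclomatic_number V E = int (card (edge_set V E)) - int (card V) + int (num_components V E)"

definition independent_set :: "'a set \<Rightarrow> ('a \<Rightarrow> 'a \<Rightarrow> bool) \<Rightarrow> 'a set \<Rightarrow> bool" where
  "independent_set V E S \<longleftrightarrow> S \<subseteq> V \<and> (\<forall>x\<in>S. \<forall>y\<in>S. \<not> E x y)"

definition independence_number :: "'a set \<Rightarrow> ('a \<Rightarrow> 'a \<Rightarrow> bool) \<Rightarrow> nat" where
  "independence_number V E = Max (card ` {S. independent_set V E S})"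

text \<open>Complex unit gain function: phi x y is the gain of the oriented edge from x to y.\<close>
definition gain_function :: "'a set \<Rightarrow> ('a \<Rightarrow> 'a \<Rightarrow> bool) \<Rightarrow> ('a \<Rightarrow> 'a \<Rightarrow> complex) \<Rightarrow> bool" where
  "gain_function V E \<phi> \<longleftrightarrow> (\<forall>x y. E x y \<longrightarrow> norm (\<phi> x y) = 1 \<and> \<phi> y x = cnj (\<phi> x y))"

definition gain_adj_matrix :: "nat \<Rightarrow> (nat \<Rightarrow> nat \<Rightarrow> bool) \<Rightarrow> (nat \<Rightarrow> nat \<Rightarrow> complex) \<Rightarrow> complex mat" where
  "gain_adj_matrix n E \<phi> = mat n n (\<lambda>(i, j). if E i j then \<phi> i j else 0)"

definition gain_rank :: "nat \<Rightarrow> (nat \<Rightarrow> nat \<Rightarrow> bool) \<Rightarrow> (nat \<Rightarrow> nat \<Rightarrow> complex) \<Rightarrow> nat" where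
  "gain_rank n E \<phi> = vec_space.rank n (gain_adj_matrix n E \<phi>)"

definition cycle_adj :: "nat \<Rightarrow> nat \<Rightarrow> nat \<Rightarrow> bool" where
  "cycle_adj q i j \<longleftrightarrow> i < q \<and> j < q \<and> (j = Suc i mod q \<or> i = Suc j mod q)"

text \<open>phi(C_q) = phi(e_{u1 u2}) ... phi(e_{uq u1}) with u_k = k - 1.\<close>
definition cycle_gain :: "nat \<Rightarrow> (nat \<Rightarrow> nat \<Rightarrow> complex) \<Rightarrow> complex" where
  "cycle_gain q \<phi> = (\<Prod>i<q. \<phi> i (Suc i mod q))"

end

theory Submission
  imports Defs
begin

(* Write P_j = phi(e_{0,1}) phi(e_{1,2}) ... phi(e_{j-1,j}) for the gain of the path from 0 to j.
   The substitution y_j = P_j x_j (switching) transforms the kernel equations of the gain cycle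
   into those of the cycle whose only nontrivial gain is phi(C_q), sitting on the closing edge:
   y_{i+1} + y_{i-1} = 0 for 0 < i < q - 1, plus one boundary equation at each of the vertices
   0 and q - 1.  The interior equations make y alternate, y_{2k} = (-1)^k y_0 and
   y_{2k+1} = (-1)^k y_1, so the kernel is read off from the boundary equations in y_0, y_1:
   it has dimension 2 if q is even and phi(C_q) = (-1)^(q/2), dimension 1 if q is odd and
   Re phi(C_q) = 0, and is trivial otherwise.  As c(C_q) = 1 and alpha(C_q) = floor(q/2),
   the value 2q - 2c - 2 alpha is q - 2 for even q and q - 1 for odd q. *)

lemma index_mult_mat_vec_sum:
  assumes "A \<in> carrier_mat nr nc" "v \<in> carrier_vec nc" "i < nr"
  shows "(A *\<^sub>v v) $ i = (\<Sum>j<nc. A $$ (i, j) * v $ j)"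
  using assms by (auto simp: scalar_prod_def lessThan_atLeast0 intro!: sum.cong)

lemma (in vec_space) lin_indpt_cols_if_trivial_kernel:
  assumes B: "B \<in> carrier_mat n m"
    and ker: "\<And>w. w \<in> carrier_vec m \<Longrightarrow> B *\<^sub>v w = 0\<^sub>v n \<Longrightarrow> w = 0\<^sub>v m"
  shows "distinct (cols B)" and "lin_indpt (set (cols B))"
proof -
  show distinct: "distinct (cols B)"
  proof (rule ccontr)
    assume "\<not> distinct (cols B)"
    then obtain i j where ij: "i < m" "j < m" "i \<noteq> j" "col B i = col B j"
      using B by (auto simp: distinct_conv_nth)
    define w where "w = vec m (\<lambda>l. if l = i then 1 else if l = j then -1 else (0::'a))"
    have w: "w \<in> carrier_vec m" by (simp add: w_def)
    have "(B *\<^sub>v w) $ r = 0" if r: "r < n" for r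
    proof -
      have "(B *\<^sub>v w) $ r = (\<Sum>l<m. (if l = i then B $$ (r, l) else 0) - (if l = j then B $$ (r, l) else 0))"
        unfolding index_mult_mat_vec_sum[OF B w r] using ij by (auto simp: w_def intro!: sum.cong)
      also have "\<dots> = col B i $ r - col B j $ r" using B r ij(1,2) by (simp add: sum_subtractf)
      finally show ?thesis using ij(4) by simp
    qed
    then have "w $ i = 0" using B ker[OF w] ij by (simp add: vec_eq_iff)
    then show False using ij by (simp add: w_def)
  qed
  show "lin_indpt (set (cols B))"
  proof
    assume "lin_dep (set (cols B))"
    then show False using lin_depE[OF B _ distinct] ker by metis
  qed
qed

lemma (in vec_space) rank_ge_if_kernel_prefix_zero:
  assumes A: "A \<in> carrier_mat n nc" and k: "k \<le> nc"
    and ker: "\<And>x. x \<in> carrier_vec nc \<Longrightarrow> A *\<^sub>v x = 0\<^sub>v n \<Longrightarrow> (\<forall>j<k. x $ j = 0) \<Longrightarrow> x = 0\<^sub>v nc"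
  shows "nc - k \<le> rank A"
proof -
  define B where "B = mat n (nc - k) (\<lambda>(i, j). A $$ (i, j + k))"
  have B: "B \<in> carrier_mat n (nc - k)" by (simp add: B_def)
  have "w = 0\<^sub>v (nc - k)" if w: "w \<in> carrier_vec (nc - k)" and Bw: "B *\<^sub>v w = 0\<^sub>v n" for w
  proof -
    define x where "x = vec nc (\<lambda>i. if i < k then 0 else w $ (i - k))"
    have x: "x \<in> carrier_vec nc" by (simp add: x_def)
    have "(A *\<^sub>v x) $ i = (B *\<^sub>v w) $ i" if i: "i < n" for i
    proof -
      have "(A *\<^sub>v x) $ i = (\<Sum>j\<in>{k..<nc}. A $$ (i, j) * x $ j)"
        unfolding index_mult_mat_vec_sum[OF A x i]
        by (rule sum.mono_neutral_right) (auto simp: x_def)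
      also have "\<dots> = (\<Sum>j<nc - k. A $$ (i, j + k) * x $ (j + k))"
        using k sum.shift_bounds_nat_ivl[of "\<lambda>j. A $$ (i, j) * x $ j" 0 k "nc - k"]
        by (simp add: lessThan_atLeast0)
      also have "\<dots> = (\<Sum>j<nc - k. B $$ (i, j) * w $ j)"
        using i by (auto simp: x_def B_def intro!: sum.cong)
      finally show ?thesis unfolding index_mult_mat_vec_sum[OF B w i] .
    qed
    then have "A *\<^sub>v x = 0\<^sub>v n" using A B Bw by (intro eq_vecI) auto
    moreover have "\<forall>j<k. x $ j = 0" using k by (simp add: x_def)
    ultimately have "x = 0\<^sub>v nc" using ker[OF x] by blast
    then show ?thesis using w
      by (intro eq_vecI) (auto simp: x_def vec_eq_iff dest!: spec[of _ "_ + k"])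
  qed
  note indpt = lin_indpt_cols_if_trivial_kernel[OF B this]
  have "set (cols B) \<subseteq> set (cols A)"
  proof
    fix c assume "c \<in> set (cols B)"
    then obtain j where "j < nc - k" "c = col B j" using B by (auto simp: in_set_conv_nth)
    moreover have "col B j = col A (j + k)" if "j < nc - k" for j
      using that A by (auto simp: B_def col_def)
    ultimately show "c \<in> set (cols A)" using A by (auto simp: cols_def)
  qed
  then have "card (set (cols B)) \<le> rank A" using rank_ge_card_indpt[OF A] indpt(2) by blast
  then show ?thesis using distinct_card[OF indpt(1)] B by simp
qed

lemma (in vec_space) col_in_leading_col_space_if_kernel_pivot:
  assumes A: "A \<in> carrier_mat n nc" and k: "m \<le> k" "k < nc"
    and u: "u \<in> carrier_vec nc" "A *\<^sub>v u = 0\<^sub>v n" "u $ k \<noteq> 0"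
    and u_zero: "\<And>j. m \<le> j \<Longrightarrow> j < nc \<Longrightarrow> j \<noteq> k \<Longrightarrow> u $ j = 0"
  shows "col A k \<in> col_space (mat n m (\<lambda>(i, j). A $$ (i, j)))"
proof -
  define B where "B = mat n m (\<lambda>(i, j). A $$ (i, j))"
  have B: "B \<in> carrier_mat n m" by (simp add: B_def)
  define w where "w = vec m (\<lambda>j. - u $ j / u $ k)"
  have w: "w \<in> carrier_vec m" by (simp add: w_def)
  have "col A k $ i = (B *\<^sub>v w) $ i" if i: "i < n" for i
  proof -
    have "0 = (\<Sum>j<nc. A $$ (i, j) * u $ j)"
      using u i by (simp add: index_mult_mat_vec_sum[OF A u(1) i, symmetric])
    also have "\<dots> = (\<Sum>j<m. A $$ (i, j) * u $ j) + (\<Sum>j\<in>{m..<nc}. A $$ (i, j) * u $ j)"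
      using k by (simp add: lessThan_atLeast0 sum.atLeastLessThan_concat)
    also have "(\<Sum>j\<in>{m..<nc}. A $$ (i, j) * u $ j) = A $$ (i, k) * u $ k"
      using k u_zero by (subst sum.mono_neutral_right[of _ "{k}"]) auto
    finally have "(\<Sum>j<m. A $$ (i, j) * u $ j) = - A $$ (i, k) * u $ k"
      by (simp add: eq_neg_iff_add_eq_0)
    then have "(\<Sum>j<m. A $$ (i, j) * w $ j) = A $$ (i, k)"
      using u(3) by (simp add: w_def sum_divide_distrib[symmetric] sum_negf)
    moreover have "(\<Sum>j<m. B $$ (i, j) * w $ j) = (\<Sum>j<m. A $$ (i, j) * w $ j)"
      using i by (auto simp: B_def intro!: sum.cong)
    ultimately show ?thesis using A i k unfolding index_mult_mat_vec_sum[OF B w i] by simp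
  qed
  then have "col A k = B *\<^sub>v w" using A B by (intro eq_vecI) auto
  moreover have "B *\<^sub>v w \<in> col_space B" using w B by (auto simp: col_space_eq[OF B])
  ultimately show ?thesis by (simp add: B_def)
qed

lemma (in vec_space) rank_le_if_kernel_pivots:
  assumes A: "A \<in> carrier_mat n nc" and m: "m \<le> nc"
    and pivot: "\<And>k. m \<le> k \<Longrightarrow> k < nc \<Longrightarrow> \<exists>u\<in>carrier_vec nc. A *\<^sub>v u = 0\<^sub>v n \<and> u $ k \<noteq> 0
                  \<and> (\<forall>j. m \<le> j \<longrightarrow> j < nc \<longrightarrow> j \<noteq> k \<longrightarrow> u $ j = 0)"
  shows "rank A \<le> m"
proof -
  define B where "B = mat n m (\<lambda>(i, j). A $$ (i, j))"
  have B: "B \<in> carrier_mat n m" by (simp add: B_def)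
  have col_B: "col B j = col A j" if "j < m" for j
    using that A m by (auto simp: B_def col_def)
  have cols_B: "set (cols B) \<subseteq> carrier_vec n" using B by (auto simp: cols_def)
  have "col A k \<in> span (set (cols B))" if k: "k < nc" for k
  proof (cases "k < m")
    case True
    then have "col B k \<in> set (cols B)" using B by (simp add: cols_def)
    then show ?thesis using in_own_span[OF cols_B] col_B[OF True] by auto
  next
    case False
    then show ?thesis
      using pivot[of k] k col_in_leading_col_space_if_kernel_pivot[OF A, of m k]
      by (auto simp: B_def col_space_def)
  qed
  then have "span (set (cols A)) \<subseteq> span (set (cols B))"
    using A by (intro span_subsetI[OF cols_B]) (auto simp: cols_def)
  moreover have "span (set (cols B)) \<subseteq> span (set (cols A))"
    using col_B A B m by (intro span_is_monotone) (force simp: cols_def)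
  ultimately have "rank A = rank B" by (simp add: rank_def)
  also have "\<dots> \<le> m" by (rule rank_le_nc[OF B])
  finally show ?thesis .
qed

definition alternating :: "'a::ring_1 \<Rightarrow> 'a \<Rightarrow> nat \<Rightarrow> 'a" where
  "alternating c0 c1 j = (-1) ^ (j div 2) * (if even j then c0 else c1)"

lemma alternating_even [simp]: "alternating c0 c1 (2 * k) = (-1) ^ k * c0"
  by (simp add: alternating_def)

lemma alternating_odd [simp]: "alternating c0 c1 (Suc (2 * k)) = (-1) ^ k * c1"
  by (simp add: alternating_def)

lemma alternating_step: "0 < i \<Longrightarrow> alternating c0 c1 (i + 1) + alternating c0 c1 (i - 1) = 0"
  by (cases i) (auto simp: alternating_def)

lemma alternating_unique:
  assumes step: "\<And>i. 0 < i \<Longrightarrow> i + 1 < q \<Longrightarrow> y (i + 1) + y (i - 1) = (0::'a::ring_1)"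
  shows "j < q \<Longrightarrow> y j = alternating (y 0) (y 1) j"
proof (induction j rule: less_induct)
  case (less j)
  show ?case
  proof (cases "j < 2")
    case True
    then show ?thesis by (auto simp: alternating_def less_2_cases_iff)
  next
    case False
    then obtain i where j: "j = i + 1" and i: "0 < i" by (cases j) auto
    have "y j = - y (i - 1)" using step[OF i] less.prems j by (simp add: eq_neg_iff_add_eq_0)
    also have "\<dots> = - alternating (y 0) (y 1) (i - 1)" using less.IH[of "i - 1"] less.prems j by simp
    also have "\<dots> = alternating (y 0) (y 1) j"
      using alternating_step[OF i, of "y 0" "y 1"] j by (metis add.commute neg_eq_iff_add_eq_0)
    finally show ?thesis .
  qed
qed

(* The kernel equations, at vertex 0, at the inner vertices and at vertex q - 1, of the cycle
   whose edges i -> i + 1 all have gain 1 except the closing edge q - 1 -> 0, which has gain \<Phi>. *)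
definition switched_cycle_kernel :: "nat \<Rightarrow> complex \<Rightarrow> (nat \<Rightarrow> complex) \<Rightarrow> bool" where
  "switched_cycle_kernel q \<Phi> y \<longleftrightarrow> (\<forall>i. 0 < i \<and> i + 1 < q \<longrightarrow> y (i + 1) + y (i - 1) = 0)
     \<and> y 1 + cnj \<Phi> * y (q - 1) = 0 \<and> \<Phi> * y 0 + y (q - 2) = 0"

lemma switched_cycle_kernel_iff_rows:
  assumes "3 \<le> q"
  shows "switched_cycle_kernel q \<Phi> y \<longleftrightarrow>
    (\<forall>i<q. (if Suc i = q then \<Phi> else 1) * y (Suc i mod q)
           + (if i = 0 then cnj \<Phi> else 1) * y (if i = 0 then q - 1 else i - 1) = 0)"
proof -
  have rows: "(\<forall>i<q. P i) \<longleftrightarrow> P 0 \<and> (\<forall>i. 0 < i \<and> i + 1 < q \<longrightarrow> P i) \<and> P (q - 1)" for P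
  proof
    assume "P 0 \<and> (\<forall>i. 0 < i \<and> i + 1 < q \<longrightarrow> P i) \<and> P (q - 1)"
    moreover have "i = 0 \<or> 0 < i \<and> i + 1 < q \<or> i = q - 1" if "i < q" for i using that by linarith
    ultimately show "\<forall>i<q. P i" by metis
  qed (use assms in auto)
  have "Suc (q - 1) = q" "q - 1 - 1 = q - 2" "Suc 0 mod q = 1" "q - 1 \<noteq> 0" using assms by auto
  moreover have "Suc i mod q = Suc i" "Suc i \<noteq> q" if "i + 1 < q" for i using that by auto
  ultimately show ?thesis unfolding rows switched_cycle_kernel_def by auto
qed

lemma switched_cycle_kernel_cong:
  assumes "2 \<le> q" and "\<And>j. j < q \<Longrightarrow> y j = z j"
  shows "switched_cycle_kernel q \<Phi> y \<longleftrightarrow> switched_cycle_kernel q \<Phi> z"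
  using assms unfolding switched_cycle_kernel_def by (auto simp del: One_nat_def)

lemma switched_cycle_kernel_iff_alternating:
  assumes "2 \<le> q"
  shows "switched_cycle_kernel q \<Phi> y \<longleftrightarrow> (\<forall>j<q. y j = alternating (y 0) (y 1) j)
    \<and> y 1 + cnj \<Phi> * alternating (y 0) (y 1) (q - 1) = 0
    \<and> \<Phi> * y 0 + alternating (y 0) (y 1) (q - 2) = 0"
proof -
  have alternating_kernel: "switched_cycle_kernel q \<Phi> (alternating c0 c1) \<longleftrightarrow>
      c1 + cnj \<Phi> * alternating c0 c1 (q - 1) = 0 \<and> \<Phi> * c0 + alternating c0 c1 (q - 2) = 0" for c0 c1
  proof -
    have "alternating c0 c1 0 = c0" "alternating c0 c1 1 = c1" by (simp_all add: alternating_def)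
    then show ?thesis
      unfolding switched_cycle_kernel_def using alternating_step[of _ c0 c1] by simp
  qed
  show ?thesis
  proof (cases "\<forall>j<q. y j = alternating (y 0) (y 1) j")
    case True
    then have "switched_cycle_kernel q \<Phi> y \<longleftrightarrow> switched_cycle_kernel q \<Phi> (alternating (y 0) (y 1))"
      by (intro switched_cycle_kernel_cong[OF assms]) (use True in blast)
    then show ?thesis using True alternating_kernel[of "y 0" "y 1"] by blast
  next
    case False
    then show ?thesis
      unfolding switched_cycle_kernel_def using alternating_unique[of q y] by blast
  qed
qed

lemma switched_cycle_kernel_even_iff:
  assumes q: "q = 2 * m" and m: "0 < m"
  shows "switched_cycle_kernel q \<Phi> y \<longleftrightarrow> (\<forall>j<q. y j = alternating (y 0) (y 1) j)
    \<and> (\<Phi> = (-1) ^ m \<or> y 0 = 0 \<and> y 1 = 0)"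
proof -
  define s :: complex where "s = (-1) ^ m"
  have s: "s * s = 1" "cnj s = s" by (simp_all add: s_def flip: power_mult_distrib)
  have "q - 1 = 2 * (m - 1) + 1" "q - 2 = 2 * (m - 1)" using q m by simp_all
  moreover have "(-1) ^ (m - 1) = - s" using m by (cases m) (simp_all add: s_def)
  ultimately have "alternating (y 0) (y 1) (q - 1) = - s * y 1"
    "alternating (y 0) (y 1) (q - 2) = - s * y 0" by simp_all
  moreover have "y 1 + cnj \<Phi> * (- s * y 1) = 0 \<longleftrightarrow> \<Phi> = s \<or> y 1 = 0"
  proof -
    have "y 1 + cnj \<Phi> * (- s * y 1) = s * cnj (s - \<Phi>) * y 1" using s by (simp add: algebra_simps)
    then show ?thesis using s by auto
  qed
  moreover have "\<Phi> * y 0 + - s * y 0 = 0 \<longleftrightarrow> \<Phi> = s \<or> y 0 = 0"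
    by (auto simp flip: distrib_right)
  ultimately show ?thesis
    using switched_cycle_kernel_iff_alternating[of q \<Phi> y] q m unfolding s_def by auto
qed

lemma switched_cycle_kernel_odd_iff:
  assumes q: "q = 2 * m + 1" and m: "0 < m"
  shows "switched_cycle_kernel q \<Phi> y \<longleftrightarrow> (\<forall>j<q. y j = alternating (y 0) (y 1) j)
    \<and> y 1 = - ((-1) ^ m * cnj \<Phi> * y 0) \<and> (Re \<Phi> = 0 \<or> y 0 = 0)"
proof -
  define s :: complex where "s = (-1) ^ m"
  have s: "s * s = 1" by (simp add: s_def flip: power_mult_distrib)
  have "q - 1 = 2 * m" "q - 2 = Suc (2 * (m - 1))" using q m by simp_all
  moreover have "(-1) ^ (m - 1) = - s" using m by (cases m) (simp_all add: s_def)
  ultimately have "alternating c0 c1 (q - 1) = s * c0" "alternating c0 c1 (q - 2) = - s * c1"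
    for c0 c1 :: complex by (simp_all add: s_def)
  moreover have "c1 + cnj \<Phi> * (s * c0) = 0 \<and> \<Phi> * c0 + - s * c1 = 0 \<longleftrightarrow>
      c1 = - (s * cnj \<Phi> * c0) \<and> (Re \<Phi> = 0 \<or> c0 = 0)" for c0 c1
  proof (cases "c1 = - (s * cnj \<Phi> * c0)")
    case True
    then have "c1 + cnj \<Phi> * (s * c0) = 0" by (simp add: algebra_simps)
    moreover have "\<Phi> * c0 + - s * c1 = (\<Phi> + cnj \<Phi>) * c0"
      using True s by (simp add: algebra_simps)
    moreover have "\<Phi> + cnj \<Phi> = 0 \<longleftrightarrow> Re \<Phi> = 0"
      by (simp add: complex_add_cnj)
    ultimately show ?thesis using True by auto
  next
    case False
    then have "c1 + cnj \<Phi> * (s * c0) \<noteq> 0" by (auto simp: algebra_simps eq_neg_iff_add_eq_0)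
    then show ?thesis using False by blast
  qed
  ultimately show ?thesis
    using switched_cycle_kernel_iff_alternating[of q \<Phi> y] q m unfolding s_def by simp
qed

definition cycle_nullity :: "nat \<Rightarrow> complex \<Rightarrow> nat" where
  "cycle_nullity q \<Phi> = (if even q then if \<Phi> = (-1) ^ (q div 2) then 2 else 0
                         else if Re \<Phi> = 0 then 1 else 0)"

lemma switched_cycle_kernel_prefix_zero:
  assumes q: "3 \<le> q" and y: "switched_cycle_kernel q \<Phi> y"
    and prefix: "\<forall>j<cycle_nullity q \<Phi>. y j = 0" and j: "j < q"
  shows "y j = 0"
proof -
  have y01: "y 0 = 0 \<and> y 1 = 0"
  proof (cases "even q")
    case True
    then obtain m where m: "q = 2 * m" "0 < m" using q by (auto elim!: evenE)
    then have "\<Phi> = (-1) ^ m \<or> y 0 = 0 \<and> y 1 = 0" using y switched_cycle_kernel_even_iff by blast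
    then show ?thesis using prefix m by (auto simp: cycle_nullity_def)
  next
    case False
    then obtain m where m: "q = 2 * m + 1" "0 < m" using q by (auto elim!: oddE)
    then have "y 1 = - ((-1) ^ m * cnj \<Phi> * y 0) \<and> (Re \<Phi> = 0 \<or> y 0 = 0)"
      using y switched_cycle_kernel_odd_iff by blast
    then show ?thesis using prefix m by (auto simp: cycle_nullity_def)
  qed
  have "2 \<le> q" using q by linarith
  then have "y j = alternating (y 0) (y 1) j"
    using y j switched_cycle_kernel_iff_alternating by blast
  then show ?thesis using y01 by (simp add: alternating_def)
qed

lemma switched_cycle_kernel_pivot:
  assumes q: "3 \<le> q" and k: "q - cycle_nullity q \<Phi> \<le> k" "k < q"
  shows "\<exists>y. switched_cycle_kernel q \<Phi> y \<and> y k \<noteq> 0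
           \<and> (\<forall>j. q - cycle_nullity q \<Phi> \<le> j \<longrightarrow> j < q \<longrightarrow> j \<noteq> k \<longrightarrow> y j = 0)"
proof (cases "even q")
  case True
  then obtain m where m: "q = 2 * m" "0 < m" using q by (auto elim!: evenE)
  then have \<Phi>: "\<Phi> = (-1) ^ m" and k: "k = q - 2 \<or> k = q - 1"
    using k by (auto simp: cycle_nullity_def split: if_splits)
  have "q - 1 = Suc (2 * (m - 1))" "q - 2 = 2 * (m - 1)" using m by simp_all
  then have boundary: "alternating c0 c1 (q - 2) = (-1) ^ (m - 1) * c0"
    "alternating c0 c1 (q - 1) = (-1) ^ (m - 1) * c1" for c0 c1 :: complex by simp_all
  have kernel: "switched_cycle_kernel q \<Phi> (alternating c0 c1)" for c0 c1
    using switched_cycle_kernel_even_iff[OF m] \<Phi> by (simp add: alternating_def)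
  have pivots: "q - cycle_nullity q \<Phi> \<le> j \<Longrightarrow> j < q \<Longrightarrow> j = q - 2 \<or> j = q - 1" for j
    using m \<Phi> by (auto simp: cycle_nullity_def)
  from k show ?thesis
  proof (elim disjE)
    assume "k = q - 2"
    then show ?thesis
      using boundary kernel by (intro exI[of _ "alternating 1 0"]) (auto dest!: pivots)
  next
    assume "k = q - 1"
    then show ?thesis
      using boundary kernel by (intro exI[of _ "alternating 0 1"]) (auto dest!: pivots)
  qed
next
  case False
  then obtain m where m: "q = 2 * m + 1" "0 < m" using q by (auto elim!: oddE)
  then have \<Phi>: "Re \<Phi> = 0" and k: "k = q - 1"
    using k by (auto simp: cycle_nullity_def split: if_splits)
  define y where "y = alternating 1 (- ((-1) ^ m * cnj \<Phi>))"
  have "switched_cycle_kernel q \<Phi> y"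
    using switched_cycle_kernel_odd_iff[OF m] \<Phi> by (simp add: y_def alternating_def)
  moreover have "y k \<noteq> 0" using k m by (simp add: y_def)
  moreover have "q - cycle_nullity q \<Phi> = q - 1" using m \<Phi> by (simp add: cycle_nullity_def)
  ultimately show ?thesis using k by auto
qed

lemma mult_cnj_eq_1: "norm z = 1 \<Longrightarrow> z * cnj z = 1"
  by (metis complex_norm_square mult.commute of_real_1 power_one)

locale unit_gain_cycle =
  fixes q :: nat and \<phi> :: "nat \<Rightarrow> nat \<Rightarrow> complex"
  assumes three_le: "3 \<le> q"
    and gain: "gain_function {0..<q} (cycle_adj q) \<phi>"
begin

definition forward_gain :: "nat \<Rightarrow> complex" where
  "forward_gain i = \<phi> i (Suc i mod q)"

definition potential :: "nat \<Rightarrow> complex" where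
  "potential i = (\<Prod>k<i. forward_gain k)"

definition predecessor :: "nat \<Rightarrow> nat" where
  "predecessor i = (if i = 0 then q - 1 else i - 1)"

abbreviation adj :: "complex mat" where
  "adj \<equiv> gain_adj_matrix q (cycle_adj q) \<phi>"

lemma forward_gain_unit:
  assumes "i < q"
  shows "norm (forward_gain i) = 1" and "\<phi> (Suc i mod q) i = cnj (forward_gain i)"
proof -
  have "cycle_adj q i (Suc i mod q)" using assms three_le by (simp add: cycle_adj_def)
  then show "norm (forward_gain i) = 1" "\<phi> (Suc i mod q) i = cnj (forward_gain i)"
    using gain by (auto simp: gain_function_def forward_gain_def)
qed

lemma potential_0 [simp]: "potential 0 = 1"
  by (simp add: potential_def)

lemma potential_Suc: "potential (Suc i) = potential i * forward_gain i"
  by (simp add: potential_def)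

lemma potential_cycle: "potential q = cycle_gain q \<phi>"
  by (simp add: potential_def forward_gain_def cycle_gain_def)

lemma potential_unit: "i \<le> q \<Longrightarrow> potential i * cnj (potential i) = 1"
proof -
  assume "i \<le> q"
  then have "norm (potential i) = 1"
    using forward_gain_unit(1) by (simp add: potential_def prod_norm[symmetric] prod.neutral)
  then show ?thesis by (rule mult_cnj_eq_1)
qed

lemma potential_nonzero: "i \<le> q \<Longrightarrow> potential i \<noteq> 0"
  using potential_unit by force

lemma potential_forward:
  assumes "i < q"
  shows "potential i * forward_gain i = (if Suc i = q then cycle_gain q \<phi> else 1) * potential (Suc i mod q)"
  using assms by (cases "Suc i = q") (auto simp: potential_Suc[symmetric] potential_cycle)

lemma potential_backward:
  assumes "i < q"
  shows "potential i * cnj (forward_gain (predecessor i))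
           = (if i = 0 then cnj (cycle_gain q \<phi>) else 1) * potential (predecessor i)"
proof (cases "i = 0")
  case True
  have "cnj (forward_gain (q - 1)) = cnj (potential q) * potential (q - 1)"
    using three_le potential_unit[of "q - 1"] potential_Suc[of "q - 1"]
    by (simp add: mult.commute mult.left_commute)
  then show ?thesis using True potential_cycle by (simp add: predecessor_def)
next
  case False
  then obtain k where i: "i = Suc k" by (cases i) auto
  then have "forward_gain k * cnj (forward_gain k) = 1"
    using assms forward_gain_unit(1)[of k] mult_cnj_eq_1 by simp
  then show ?thesis using False i by (simp add: predecessor_def potential_Suc mult.assoc)
qed

lemma adj_mult_vec_nth:
  assumes x: "x \<in> carrier_vec q" and i: "i < q"
  shows "(adj *\<^sub>v x) $ i = forward_gain i * x $ (Suc i mod q)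
           + cnj (forward_gain (predecessor i)) * x $ (predecessor i)"
proof -
  let ?s = "Suc i mod q" and ?p = "predecessor i"
  have p: "?p < q" "Suc ?p mod q = i" and sp: "?s \<noteq> ?p"
    using i three_le by (auto simp: predecessor_def mod_Suc)
  have neighbours: "cycle_adj q i j \<longleftrightarrow> j = ?s \<or> j = ?p" if "j < q" for j
    using that i three_le by (auto simp: cycle_adj_def predecessor_def mod_Suc split: if_splits)
  have "(adj *\<^sub>v x) $ i = (\<Sum>j<q. adj $$ (i, j) * x $ j)"
    by (rule index_mult_mat_vec_sum[OF _ x i]) (simp add: gain_adj_matrix_def)
  also have "\<dots> = (\<Sum>j\<in>{?s, ?p}. adj $$ (i, j) * x $ j)"
    using i p neighbours by (intro sum.mono_neutral_right) (auto simp: gain_adj_matrix_def)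
  also have "\<dots> = \<phi> i ?s * x $ ?s + \<phi> i ?p * x $ ?p"
    using i p sp neighbours by (simp add: gain_adj_matrix_def)
  finally show ?thesis
    using forward_gain_unit(2)[OF p(1)] p(2) by (simp add: forward_gain_def)
qed

lemma kernel_iff_switched:
  assumes x: "x \<in> carrier_vec q"
  shows "adj *\<^sub>v x = 0\<^sub>v q \<longleftrightarrow> switched_cycle_kernel q (cycle_gain q \<phi>) (\<lambda>j. potential j * x $ j)"
proof -
  have "potential i * (adj *\<^sub>v x) $ i
          = (if Suc i = q then cycle_gain q \<phi> else 1) * (potential (Suc i mod q) * x $ (Suc i mod q))
            + (if i = 0 then cnj (cycle_gain q \<phi>) else 1) * (potential (predecessor i) * x $ predecessor i)"
    if i: "i < q" for i
    unfolding adj_mult_vec_nth[OF x i] distrib_left mult.assoc[symmetric]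
      potential_forward[OF i] potential_backward[OF i] ..
  moreover have "adj *\<^sub>v x = 0\<^sub>v q \<longleftrightarrow> (\<forall>i<q. potential i * (adj *\<^sub>v x) $ i = 0)"
    using x potential_nonzero by (auto simp: vec_eq_iff gain_adj_matrix_def)
  ultimately show ?thesis
    by (simp add: switched_cycle_kernel_iff_rows[OF three_le] predecessor_def)
qed

lemma kernel_prefix_zero:
  assumes x: "x \<in> carrier_vec q" and adj_x: "adj *\<^sub>v x = 0\<^sub>v q"
    and prefix: "\<forall>j<cycle_nullity q (cycle_gain q \<phi>). x $ j = 0"
  shows "x = 0\<^sub>v q"
proof -
  let ?y = "\<lambda>j. potential j * x $ j"
  have "\<forall>j<cycle_nullity q (cycle_gain q \<phi>). ?y j = 0" using prefix by simp
  then have "?y j = 0" if "j < q" for j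
    using switched_cycle_kernel_prefix_zero[OF three_le] kernel_iff_switched[OF x] adj_x that by blast
  then show ?thesis using x potential_nonzero by (auto simp: vec_eq_iff)
qed

lemma kernel_pivot:
  assumes k: "q - cycle_nullity q (cycle_gain q \<phi>) \<le> k" "k < q"
  shows "\<exists>u\<in>carrier_vec q. adj *\<^sub>v u = 0\<^sub>v q \<and> u $ k \<noteq> 0
           \<and> (\<forall>j. q - cycle_nullity q (cycle_gain q \<phi>) \<le> j \<longrightarrow> j < q \<longrightarrow> j \<noteq> k \<longrightarrow> u $ j = 0)"
proof -
  obtain y where y: "switched_cycle_kernel q (cycle_gain q \<phi>) y" "y k \<noteq> 0"
    and zero: "\<forall>j. q - cycle_nullity q (cycle_gain q \<phi>) \<le> j \<longrightarrow> j < q \<longrightarrow> j \<noteq> k \<longrightarrow> y j = 0"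
    using switched_cycle_kernel_pivot[OF three_le k] by blast
  define u where "u = vec q (\<lambda>j. cnj (potential j) * y j)"
  have "potential j * u $ j = y j" if "j < q" for j
    using that potential_unit[of j] by (simp add: u_def mult.assoc[symmetric])
  then have "switched_cycle_kernel q (cycle_gain q \<phi>) (\<lambda>j. potential j * u $ j)"
    using y(1) three_le switched_cycle_kernel_cong[of q "\<lambda>j. potential j * u $ j" y] by simp
  then have "adj *\<^sub>v u = 0\<^sub>v q" by (simp add: kernel_iff_switched u_def)
  moreover have "u $ k \<noteq> 0" using y(2) k potential_nonzero by (simp add: u_def)
  ultimately show ?thesis using zero by (intro bexI[of _ u]) (auto simp: u_def)
qed

lemma gain_rank_cycle: "gain_rank q (cycle_adj q) \<phi> = q - cycle_nullity q (cycle_gain q \<phi>)"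
proof -
  have adj: "adj \<in> carrier_mat q q" by (simp add: gain_adj_matrix_def)
  have "cycle_nullity q (cycle_gain q \<phi>) \<le> q" using three_le by (simp add: cycle_nullity_def)
  then have "q - cycle_nullity q (cycle_gain q \<phi>) \<le> vec_space.rank q adj"
    by (intro vec_space.rank_ge_if_kernel_prefix_zero[OF adj]) (use kernel_prefix_zero in auto)
  moreover have "vec_space.rank q adj \<le> q - cycle_nullity q (cycle_gain q \<phi>)"
    by (intro vec_space.rank_le_if_kernel_pivots[OF adj]) (use kernel_pivot in auto)
  ultimately show ?thesis by (simp add: gain_rank_def)
qed

end

lemma edge_set_cycle: "edge_set {0..<q} (cycle_adj q) = (\<lambda>i. {i, Suc i mod q}) ` {0..<q}"
proof (intro equalityI subsetI)
  fix e assume "e \<in> (\<lambda>i. {i, Suc i mod q}) ` {0..<q}"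
  then obtain i where "i < q" "e = {i, Suc i mod q}" by auto
  then show "e \<in> edge_set {0..<q} (cycle_adj q)" unfolding edge_set_def cycle_adj_def by force
qed (auto simp: edge_set_def cycle_adj_def insert_commute)

lemma card_edge_set_cycle:
  assumes "3 \<le> q"
  shows "card (edge_set {0..<q} (cycle_adj q)) = q"
proof -
  have "inj_on (\<lambda>i. {i, Suc i mod q}) {0..<q}"
  proof (rule inj_onI)
    fix i j assume "i \<in> {0..<q}" "j \<in> {0..<q}" "{i, Suc i mod q} = {j, Suc j mod q}"
    then show "i = j" using assms by (auto simp: doubleton_eq_iff mod_Suc split: if_splits)
  qed
  then show ?thesis by (simp add: edge_set_cycle card_image)
qed

lemma num_components_cycle:
  assumes "0 < q"
  shows "num_components {0..<q} (cycle_adj q) = 1"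
proof -
  let ?R = "\<lambda>a b. a \<in> {0..<q} \<and> b \<in> {0..<q} \<and> cycle_adj q a b"
  have "?R\<^sup>*\<^sup>* 0 i \<and> ?R\<^sup>*\<^sup>* i 0" if "i < q" for i
    using that
  proof (induction i)
    case (Suc i)
    then have "?R i (Suc i)" "?R (Suc i) i" "?R\<^sup>*\<^sup>* 0 i" "?R\<^sup>*\<^sup>* i 0"
      by (auto simp: cycle_adj_def)
    then show ?case by (blast intro: rtranclp.rtrancl_into_rtrancl converse_rtranclp_into_rtranclp)
  qed simp
  then have "?R\<^sup>*\<^sup>* a b" if "a < q" "b < q" for a b
    using that by (meson rtranclp_trans)
  then have "connected_rel {0..<q} (cycle_adj q) = {0..<q} \<times> {0..<q}"
    by (auto simp: connected_rel_def)
  moreover have "{0..<q} // ({0..<q} \<times> {0..<q}) = {{0..<q}}"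
    using assms by (auto simp: quotient_def)
  ultimately show ?thesis by (simp add: num_components_def)
qed

lemma cyclomatic_number_cycle:
  assumes "3 \<le> q"
  shows "cyclomatic_number {0..<q} (cycle_adj q) = 1"
  using assms by (simp add: cyclomatic_number_def card_edge_set_cycle num_components_cycle)

lemma independent_set_cycle_card_le:
  assumes "independent_set {0..<q} (cycle_adj q) S"
  shows "2 * card S \<le> q"
proof -
  have S: "S \<subseteq> {0..<q}" and indep: "\<And>x y. x \<in> S \<Longrightarrow> y \<in> S \<Longrightarrow> \<not> cycle_adj q x y"
    using assms by (auto simp: independent_set_def)
  let ?succ = "\<lambda>i. Suc i mod q"
  have "inj_on ?succ S"
    by (rule inj_on_subset[OF _ S]) (auto simp: inj_on_def mod_Suc split: if_splits)
  moreover have "?succ ` S \<subseteq> {0..<q} - S"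
    using S indep by (fastforce simp: cycle_adj_def)
  ultimately have "card S \<le> card ({0..<q} - S)"
    by (metis card_image card_mono finite_Diff finite_atLeastLessThan)
  also have "\<dots> = q - card S" using S by (simp add: card_Diff_subset finite_subset)
  finally show ?thesis by simp
qed

lemma even_vertices_independent:
  "independent_set {0..<q} (cycle_adj q) ((\<lambda>k. 2 * k) ` {..<q div 2})"
  unfolding independent_set_def cycle_adj_def by auto presburger+

lemma independence_number_cycle: "independence_number {0..<q} (cycle_adj q) = q div 2"
  unfolding independence_number_def
proof (rule Max_eqI)
  show "finite (card ` {S. independent_set {0..<q} (cycle_adj q) S})"
    by (rule finite_imageI, rule finite_subset[of _ "Pow {0..<q}"]) (auto simp: independent_set_def)
  show "k \<le> q div 2" if "k \<in> card ` {S. independent_set {0..<q} (cycle_adj q) S}" for k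
    using that independent_set_cycle_card_le by fastforce
  have "card ((\<lambda>k. 2 * k) ` {..<q div 2}) = q div 2" by (simp add: card_image inj_on_def)
  then show "q div 2 \<in> card ` {S. independent_set {0..<q} (cycle_adj q) S}"
    using even_vertices_independent by (metis (mono_tags) image_eqI mem_Collect_eq)
qed

theorem lemma4p3:
  fixes q :: nat and \<phi> :: "nat \<Rightarrow> nat \<Rightarrow> complex"
  assumes "q \<ge> 3"
    and "gain_function {0..<q} (cycle_adj q) \<phi>"
  shows "int (gain_rank q (cycle_adj q) \<phi>)
           = 2 * int q - 2 * cyclomatic_number {0..<q} (cycle_adj q)
             - 2 * int (independence_number {0..<q} (cycle_adj q))
         \<longleftrightarrow> (even q \<and> cycle_gain q \<phi> = (-1) ^ (q div 2))
             \<or> (odd q \<and> Re ((-1) ^ ((q - 1) div 2) * cycle_gain q \<phi>) = 0)"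
proof -
  interpret unit_gain_cycle q \<phi> using assms by unfold_locales
  have "2 * int q - 2 * cyclomatic_number {0..<q} (cycle_adj q)
          - 2 * int (independence_number {0..<q} (cycle_adj q)) = int q - (if even q then 2 else 1)"
    using assms(1) by (simp add: cyclomatic_number_cycle independence_number_cycle) presburger
  moreover have "Re ((-1) ^ k * z) = 0 \<longleftrightarrow> Re z = 0" for k and z :: complex
    by (cases "even k") simp_all
  ultimately show ?thesis
    using assms(1) by (auto simp: gain_rank_cycle cycle_nullity_def)
qed

end
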